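(* Fix a vertex $\mu$. Let $fE=\widehat f\widehat E\neq0$ and $G$ be antinef divisors. Then for every vertex $\nu$, $$\lambda(G,\widehat f_{\langle\widehat f\rangle}\widehat E;\nu)\ge\lambda(G,fE;\nu),$$ with equality if and only if either $d(\mu,\nu)\le1$, or $\widehat f_j=0$ for every $j\in\Gamma^i_\nu$, where $i$ is the vertex of the path $[\mu,\nu]$ adjacent to $\mu$.
   Context: Setting: $R$ two-dimensional regular local ring with algebraically closed residue field; $\pi:X=X_{N+1}\to\cdots\to X_1=\operatorname{Spec}R$ a composition of point blowups; $E_\nu$ strict and $E^*_\nu$ total transforms of exceptional divisors; proximity matrix $P$ ($p_{\mu,\mu}=1$, $p_{\mu,\nu}=-1$ if $x_\mu$ lies on the strict transform on $X_\mu$ of the exceptional divisor of the blowup of $x_\nu$, else $0$), $Q=(q_{\mu,\nu})=P^{-1}$, $V=(P^TP)^{-1}$. Basis $\widehat E_\nu$ with $E_\mu\cdot\widehat E_\nu=-\delta_{\mu,\nu}$; $\widehat f\widehat E=\sum\widehat f_\nu\widehat E_\nu=\sum f_\nu E_\nu=fE$ with $f=\widehat fV$; antinef means $\widehat f\ge0$. $K=\sum E^*_\nu=\sum k_\nu E_\nu$. Dual graph $\Gamma$ on $1..N$, $\gamma\sim\eta$ iff $\gamma\ne\eta$ and $E_\gamma\cap E_\eta\neq\emptyset$; $d(\mu,\nu)$ the graph distance; $[\mu,\nu]$ the path; branch $\Gamma^\mu_\nu$ = maximal connected subgraph containing $\nu$ but not $\mu$ ($\Gamma^\mu_\mu=\emptyset$).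 $\lambda(F,G;\nu)=(f_\nu+k_\nu+1)/g_\nu$. Modification: $\mathbf 1_i$ standard basis vector of $\mathbb Q^\Gamma$; $\rho_{[\alpha,\beta]}(\nu)=V_{\beta,\nu}/V_{\alpha,\nu}$; $\widehat r_{[\alpha,\beta]}=\mathbf 1_\beta-\rho_{[\alpha,\beta]}(\alpha)\mathbf 1_\alpha$; $\widehat f_{\langle\widehat g\rangle}=\widehat f-\sum_{i\sim\mu}\sum_{j\in\Gamma^\mu_i}\widehat g_j\widehat r_{[i,j]}$. *)

theory Defs
  imports Complex_Main
begin

text \<open>Combinatorial encoding of a composition of N point blowups.
  Vertices (exceptional divisors) are 1..N.  The configuration c assigns to each
  mu in 2..N the set c mu of indices nu < mu such that the centre x_mu lies on the
  strict transform of E_nu on X_mu (i.e. the points to which x_mu is proximate).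
  The first centre is the closed point of Spec R, so c 1 = {}.\<close>

type_synonym config = "nat \<Rightarrow> nat set"

text \<open>dgraph c m = set of edges of the dual graph of the exceptional divisors on X_(m+1).\<close>
fun dgraph :: "config \<Rightarrow> nat \<Rightarrow> nat set set" where
  "dgraph c 0 = {}"
| "dgraph c (Suc m) =
     (if card (c (Suc m)) = 2 then dgraph c m - {c (Suc m)} else dgraph c m)
     \<union> (\<lambda>v. {Suc m, v}) ` c (Suc m)"

definition valid_blowups :: "nat \<Rightarrow> config \<Rightarrow> bool" where
  "valid_blowups N c \<longleftrightarrow> N \<ge> 1 \<and> c 1 = {} \<and>
     (\<forall>m\<in>{2..N}. c m \<subseteq> {1..<m} \<and>
        (card (c m) = 1 \<or> (card (c m) = 2 \<and> c m \<in> dgraph c (m - 1))))"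

definition prox :: "config \<Rightarrow> nat \<Rightarrow> nat \<Rightarrow> real" where
  "prox c m n = (if m = n then 1 else if n \<in> c m then -1 else 0)"

definition mat_inv :: "nat \<Rightarrow> (nat \<Rightarrow> nat \<Rightarrow> real) \<Rightarrow> (nat \<Rightarrow> nat \<Rightarrow> real)" where
  "mat_inv N A = (SOME B. \<forall>i\<in>{1..N}. \<forall>j\<in>{1..N}.
       (\<Sum>k=1..N. B i k * A k j) = (if i = j then 1 else 0))"

definition PtP :: "nat \<Rightarrow> config \<Rightarrow> nat \<Rightarrow> nat \<Rightarrow> real" where
  "PtP N c i j = (\<Sum>k=1..N. prox c k i * prox c k j)"

definition Qmat :: "nat \<Rightarrow> config \<Rightarrow> nat \<Rightarrow> nat \<Rightarrow> real" where
  "Qmat N c = mat_inv N (prox c)"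

definition Vmat :: "nat \<Rightarrow> config \<Rightarrow> nat \<Rightarrow> nat \<Rightarrow> real" where
  "Vmat N c = mat_inv N (PtP N c)"

text \<open>Coefficients k_nu of K = sum of total transforms E*_nu = sum k_nu E_nu.\<close>
definition kcoef :: "nat \<Rightarrow> config \<Rightarrow> nat \<Rightarrow> real" where
  "kcoef N c n = (\<Sum>k=1..N. Qmat N c n k)"

text \<open>hat coefficients: fhat = f P^T P (so that f = fhat V).\<close>
definition hatc :: "nat \<Rightarrow> config \<Rightarrow> (nat \<Rightarrow> real) \<Rightarrow> nat \<Rightarrow> real" where
  "hatc N c f n = (\<Sum>l=1..N. f l * PtP N c l n)"

definition ecoef :: "nat \<Rightarrow> config \<Rightarrow> (nat \<Rightarrow> real) \<Rightarrow> nat \<Rightarrow> real" where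
  "ecoef N c h n = (\<Sum>t=1..N. h t * Vmat N c t n)"

definition antinef :: "nat \<Rightarrow> config \<Rightarrow> (nat \<Rightarrow> real) \<Rightarrow> bool" where
  "antinef N c f \<longleftrightarrow> (\<forall>n\<in>{1..N}. hatc N c f n \<ge> 0)"

definition adj :: "nat \<Rightarrow> config \<Rightarrow> nat \<Rightarrow> nat \<Rightarrow> bool" where
  "adj N c a b \<longleftrightarrow> a \<noteq> b \<and> {a, b} \<in> dgraph c N"

definition gdist :: "nat \<Rightarrow> config \<Rightarrow> nat \<Rightarrow> nat \<Rightarrow> nat" where
  "gdist N c a b = (LEAST n. (adj N c ^^ n) a b)"

text \<open>Branch Gamma^mu_nu: maximal connected subgraph containing nu but not mu (empty if nu = mu).\<close>
definition branch :: "nat \<Rightarrow> config \<Rightarrow> nat \<Rightarrow> nat \<Rightarrow> nat set" where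
  "branch N c m n = {j \<in> {1..N}. n \<in> {1..N} \<and> n \<noteq> m \<and>
      (\<lambda>x y. adj N c x y \<and> x \<noteq> m \<and> y \<noteq> m)\<^sup>*\<^sup>* n j}"

definition rho :: "nat \<Rightarrow> config \<Rightarrow> nat \<Rightarrow> nat \<Rightarrow> nat \<Rightarrow> real" where
  "rho N c a b n = Vmat N c b n / Vmat N c a n"

definition rhat :: "nat \<Rightarrow> config \<Rightarrow> nat \<Rightarrow> nat \<Rightarrow> nat \<Rightarrow> real" where
  "rhat N c a b t = (if t = b then 1 else 0) - rho N c a b a * (if t = a then 1 else 0)"

definition modif :: "nat \<Rightarrow> config \<Rightarrow> nat \<Rightarrow> (nat \<Rightarrow> real) \<Rightarrow> (nat \<Rightarrow> real) \<Rightarrow> nat \<Rightarrow> real" where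
  "modif N c m fh gh t = fh t -
     (\<Sum>i\<in>{i\<in>{1..N}. adj N c i m}. \<Sum>j\<in>branch N c m i. gh j * rhat N c i j t)"

definition lam :: "nat \<Rightarrow> config \<Rightarrow> (nat \<Rightarrow> real) \<Rightarrow> (nat \<Rightarrow> real) \<Rightarrow> nat \<Rightarrow> real" where
  "lam N c f g n = (f n + kcoef N c n + 1) / g n"

end

theory Submission
  imports Defs "Jordan_Normal_Form.Determinant"
begin

text \<open>The coefficient at nu of the modified divisor is f_nu - S, where
  S = sum over neighbours i of mu and j in the branch of mu through i of fhat_j * Vschur i j nu, and
  Vschur i t nu = V_{t nu} - V_{t i} V_{i nu} / V_{i i} is the Schur complement of V at the pivot (i,i).
  So the theorem amounts to 0 <= S < f_nu, together with a description of S = 0.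

  The vector t |-> Vschur i t nu is mapped by P^T P to e_nu - (V_{i nu}/V_{i i}) e_i. The matrix P^T P is
  positive definite and its off-diagonal part is minus the adjacency matrix of the dual graph, which is
  a tree. Discrete minimum principles therefore show that this vector is nonnegative, vanishes off the
  branch of the tree at i containing nu, and is positive on it. Hence S >= 0, with equality iff fhat
  vanishes on every intersection of the branch at mu through i with the branch at i containing nu;
  in a tree such an intersection is nonempty only when i is the first step of the path from mu to nu
  and d(mu,nu) >= 2, and then it is the whole branch at i containing nu. Finally S < f_nu = sum_t
  fhat_t V_{t nu}: the branches at mu are disjoint, so each fhat_t is corrected at most once, by
  Vschur i t nu < V_{t nu}.\<close>

lemma matrix_left_inverse_of_right_inverse:
  fixes A B :: "nat \<Rightarrow> nat \<Rightarrow> real"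
  assumes AB: "\<And>i j. i \<in> {1..N} \<Longrightarrow> j \<in> {1..N} \<Longrightarrow>
      (\<Sum>k=1..N. A i k * B k j) = (if i = j then 1 else 0)"
    and i: "i \<in> {1..N}" and j: "j \<in> {1..N}"
  shows "(\<Sum>k=1..N. B i k * A k j) = (if i = j then 1 else 0)"
proof -
  define A' where "A' = mat N N (\<lambda>(i,j). A (Suc i) (Suc j))"
  define B' where "B' = mat N N (\<lambda>(i,j). B (Suc i) (Suc j))"
  have carrier: "A' \<in> carrier_mat N N" "B' \<in> carrier_mat N N" by (auto simp: A'_def B'_def)
  have "A' * B' = 1\<^sub>m N"
  proof (rule eq_matI)
    fix a b assume ab: "a < dim_row (1\<^sub>m N)" "b < dim_col (1\<^sub>m N)"
    have "(A' * B') $$ (a,b) = (\<Sum>k=1..N. A (Suc a) k * B k (Suc b))"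
      using ab by (simp add: A'_def B'_def scalar_prod_def atLeast0LessThan sum.atLeast1_atMost_eq)
    thus "(A' * B') $$ (a,b) = 1\<^sub>m N $$ (a,b)" using ab AB[of "Suc a" "Suc b"] by simp
  qed (auto simp: A'_def B'_def)
  hence BA: "B' * A' = 1\<^sub>m N" using mat_mult_left_right_inverse[OF carrier] by blast
  have "i = Suc (i - 1)" "j = Suc (j - 1)" "i - 1 < N" "j - 1 < N" using i j by auto
  moreover have "(\<Sum>k=1..N. B i k * A k j) = (B' * A') $$ (i - 1, j - 1)" if "i - 1 < N" "j - 1 < N"
    using that i j by (simp add: A'_def B'_def scalar_prod_def atLeast0LessThan sum.atLeast1_atMost_eq)
  ultimately show ?thesis using BA by auto
qed

lemma mat_inv_eqI:
  fixes A B :: "nat \<Rightarrow> nat \<Rightarrow> real"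
  assumes AB: "\<And>i j. i \<in> {1..N} \<Longrightarrow> j \<in> {1..N} \<Longrightarrow>
      (\<Sum>k=1..N. A i k * B k j) = (if i = j then 1 else 0)"
    and i: "i \<in> {1..N}" and j: "j \<in> {1..N}"
  shows "mat_inv N A i j = B i j"
proof -
  let ?left_inverse = "\<lambda>C. \<forall>i\<in>{1..N}. \<forall>j\<in>{1..N}.
      (\<Sum>k=1..N. C i k * A k j) = (if i = j then 1 else 0)"
  have "?left_inverse B" using matrix_left_inverse_of_right_inverse[OF AB] by blast
  hence C: "?left_inverse (mat_inv N A)" unfolding mat_inv_def by (rule someI[where P = ?left_inverse])
  define C where "C = mat_inv N A"
  have "C i j = (\<Sum>l=1..N. if l = j then C i l else 0)" using j by (simp add: sum.delta')
  also have "\<dots> = (\<Sum>l=1..N. C i l * (\<Sum>k=1..N. A l k * B k j))"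
    by (rule sum.cong[OF refl]) (use AB[OF _ j] in simp)
  also have "\<dots> = (\<Sum>k=1..N. (\<Sum>l=1..N. C i l * A l k) * B k j)"
    unfolding sum_distrib_left sum_distrib_right mult.assoc by (rule sum.swap)
  also have "\<dots> = (\<Sum>k=1..N. if i = k then B k j else 0)"
    by (rule sum.cong[OF refl]) (use C i in \<open>auto simp: C_def\<close>)
  also have "\<dots> = B i j" using i by (simp add: sum.delta)
  finally show ?thesis by (simp add: C_def)
qed

section \<open>Minimum principles for Stieltjes matrices\<close>

definition quad_form :: "nat \<Rightarrow> (nat \<Rightarrow> nat \<Rightarrow> real) \<Rightarrow> (nat \<Rightarrow> real) \<Rightarrow> real" where
  "quad_form N M x = (\<Sum>b=1..N. x b * (\<Sum>t=1..N. M b t * x t))"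

definition posdef_on :: "nat \<Rightarrow> (nat \<Rightarrow> nat \<Rightarrow> real) \<Rightarrow> bool" where
  "posdef_on N M \<longleftrightarrow> (\<forall>x. quad_form N M x \<le> 0 \<longrightarrow> (\<forall>t\<in>{1..N}. x t = 0))"

lemma nonneg_if_superharmonic_where_negative:
  fixes M :: "nat \<Rightarrow> nat \<Rightarrow> real" and y :: "nat \<Rightarrow> real"
  assumes offdiag: "\<And>a b. a \<noteq> b \<Longrightarrow> M a b \<le> 0"
    and definite: "posdef_on N M"
    and super: "\<And>b. b \<in> {1..N} \<Longrightarrow> y b < 0 \<Longrightarrow> (\<Sum>t=1..N. M b t * y t) \<ge> 0"
    and t: "t \<in> {1..N}"
  shows "y t \<ge> 0"
proof -
  define w where "w = (\<lambda>t. max (- y t) 0)"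
  define p where "p = (\<lambda>t. max (y t) 0)"
  have y: "y t = p t - w t" for t by (simp add: w_def p_def max_def)
  have "(\<Sum>b=1..N. w b * (\<Sum>t=1..N. M b t * y t)) =
      (\<Sum>b=1..N. w b * (\<Sum>t=1..N. M b t * p t)) - quad_form N M w"
    by (simp add: quad_form_def y algebra_simps sum_subtractf sum_distrib_left)
  moreover have "(\<Sum>b=1..N. w b * (\<Sum>t=1..N. M b t * p t)) \<le> 0"
  proof (rule sum_nonpos)
    fix b
    have "w b * M b t * p t \<le> 0" for t
    proof (cases "b = t")
      case False
      thus ?thesis using offdiag[OF False]
        by (simp add: w_def p_def mult_nonneg_nonpos mult_nonpos_nonneg)
    qed (simp add: w_def p_def max_def)
    thus "w b * (\<Sum>t=1..N. M b t * p t) \<le> 0"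
      by (simp add: sum_distrib_left mult.assoc sum_nonpos)
  qed
  moreover have "(\<Sum>b=1..N. w b * (\<Sum>t=1..N. M b t * y t)) \<ge> 0"
  proof (rule sum_nonneg)
    fix b assume b: "b \<in> {1..N}"
    show "w b * (\<Sum>t=1..N. M b t * y t) \<ge> 0"
    proof (cases "y b < 0")
      case True thus ?thesis using super[OF b True] by (simp add: w_def mult_nonpos_nonneg)
    qed (simp add: w_def)
  qed
  ultimately have "w t = 0" using definite t by (simp add: posdef_on_def)
  thus ?thesis by (simp add: w_def max_def split: if_splits)
qed

lemma vanishes_if_harmonic_on_sealed_set:
  fixes M :: "nat \<Rightarrow> nat \<Rightarrow> real" and y :: "nat \<Rightarrow> real"
  assumes definite: "posdef_on N M"
    and C: "C \<subseteq> {1..N}"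
    and harmonic: "\<And>b. b \<in> C \<Longrightarrow> (\<Sum>t=1..N. M b t * y t) = 0"
    and sealed: "\<And>b t. b \<in> C \<Longrightarrow> t \<in> {1..N} \<Longrightarrow> t \<notin> C \<Longrightarrow> M b t * y t = 0"
    and j: "j \<in> C"
  shows "y j = 0"
proof -
  define z where "z = (\<lambda>t. if t \<in> C then y t else 0)"
  have "(\<Sum>t=1..N. M b t * z t) = (\<Sum>t=1..N. M b t * y t)" if "b \<in> C" for b
    by (rule sum.cong[OF refl]) (use sealed[OF that] in \<open>auto simp: z_def\<close>)
  hence "(\<Sum>t=1..N. M b t * z t) = 0" if "b \<in> C" for b using harmonic that by simp
  hence "quad_form N M z = 0"
    unfolding quad_form_def by (intro sum.neutral) (auto simp: z_def)
  hence "z j = 0" using definite C j by (auto simp: posdef_on_def)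
  thus ?thesis using j by (simp add: z_def)
qed

lemma zero_of_nonneg_superharmonic_spreads:
  fixes M :: "nat \<Rightarrow> nat \<Rightarrow> real" and y :: "nat \<Rightarrow> real"
  assumes offdiag: "\<And>a b. a \<noteq> b \<Longrightarrow> M a b \<le> 0"
    and nonneg: "\<And>t. t \<in> {1..N} \<Longrightarrow> y t \<ge> 0"
    and x: "y x = 0" and super: "(\<Sum>t=1..N. M x t * y t) \<ge> 0"
  shows "(\<Sum>t=1..N. M x t * y t) = 0" and "\<And>t. t \<in> {1..N} \<Longrightarrow> M x t * y t = 0"
proof -
  have terms: "- (M x t * y t) \<ge> 0" if "t \<in> {1..N}" for t
  proof (cases "t = x")
    case False
    thus ?thesis using offdiag[of x t] nonneg[OF that] by (simp add: mult_nonpos_nonneg)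
  qed (simp add: x)
  hence "(\<Sum>t=1..N. - (M x t * y t)) \<ge> 0" by (rule sum_nonneg)
  thus sum0: "(\<Sum>t=1..N. M x t * y t) = 0" using super by (simp add: sum_negf)
  have "(\<Sum>t=1..N. - (M x t * y t)) = 0" using sum0 by (simp add: sum_negf)
  from sum_nonneg_0[OF finite_atLeastAtMost terms this]
  show "\<And>t. t \<in> {1..N} \<Longrightarrow> M x t * y t = 0" by simp
qed

section \<open>Walks and bridges\<close>

lemma walk_avoids_or_passes_through:
  "(R ^^ k) x y \<Longrightarrow> x \<noteq> p \<Longrightarrow>
    (\<lambda>a b. R a b \<and> a \<noteq> p \<and> b \<noteq> p)\<^sup>*\<^sup>* x y \<or> (\<exists>k'<k. (R ^^ k') p y)"
proof (induction k arbitrary: x)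
  case (Suc k)
  obtain z where z: "R x z" "(R ^^ k) z y" using relpowp_Suc_D2[OF Suc.prems(1)] by blast
  show ?case
  proof (cases "z = p")
    case False
    from Suc.IH[OF z(2) False] show ?thesis
      using z(1) False Suc.prems(2) less_SucI by (blast intro: converse_rtranclp_into_rtranclp)
  qed (use z in blast)
qed simp

lemma rtranclp_restrict_invariant:
  assumes "R\<^sup>*\<^sup>* a b" "P a" "\<And>u w. R u w \<Longrightarrow> P u \<Longrightarrow> P w"
  shows "(\<lambda>u w. R u w \<and> P u \<and> P w)\<^sup>*\<^sup>* a b"
proof -
  have "P b \<and> (\<lambda>u w. R u w \<and> P u \<and> P w)\<^sup>*\<^sup>* a b" using assms(1)
  proof (induction rule: rtranclp_induct)
    case (step z b)
    hence "P b" using assms(3) by blast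
    thus ?case using step by (auto intro: rtranclp.rtrancl_into_rtrancl)
  qed (use assms(2) in simp)
  thus ?thesis by simp
qed

lemma rtranclp_subsumed:
  assumes "\<And>a b. R a b \<Longrightarrow> S\<^sup>*\<^sup>* a b" and "R\<^sup>*\<^sup>* x y"
  shows "S\<^sup>*\<^sup>* x y"
  using assms(2) by (induction rule: rtranclp_induct) (auto dest: assms(1) intro: rtranclp_trans)

definition bridge_side :: "nat set set \<Rightarrow> nat \<Rightarrow> nat \<Rightarrow> nat set \<Rightarrow> bool" where
  "bridge_side G x y S \<longleftrightarrow> x \<in> S \<and> y \<notin> S \<and>
     (\<forall>u w. {u,w} \<in> G \<longrightarrow> u \<in> S \<longrightarrow> w \<notin> S \<longrightarrow> {u,w} = {x,y})"

lemma bridge_side_Compl: "bridge_side G x y S \<Longrightarrow> bridge_side G y x (- S)"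
  unfolding bridge_side_def by (metis ComplD ComplI insert_commute)

section \<open>The dual graph and the matrices Q and V\<close>

text \<open>The rows of Q = P\<inverse>, computed by forward substitution (P is unitriangular);
  the guard b < a only serves termination.\<close>

function Qrow :: "config \<Rightarrow> nat \<Rightarrow> nat \<Rightarrow> real" where
  "Qrow c a t = (if a = t then 1 else 0) + (\<Sum>b\<in>{b\<in>c a. b < a}. Qrow c b t)"
  by auto
termination by (relation "measure (\<lambda>(c,a,t). a)") auto

declare Qrow.simps[simp del]

lemma Qrow_nonneg: "Qrow c a t \<ge> 0"
  by (induction c a t rule: Qrow.induct) (subst Qrow.simps, auto intro!: add_nonneg_nonneg sum_nonneg)

lemma Qrow_diag: "Qrow c a a \<ge> 1"
  by (subst Qrow.simps) (auto intro: sum_nonneg Qrow_nonneg)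

context
  fixes N :: nat and c :: config
  assumes valid: "valid_blowups N c"
begin

lemma config_first: "c 1 = {}"
  using valid by (simp add: valid_blowups_def)

lemma config_earlier: "m \<in> {1..N} \<Longrightarrow> c m \<subseteq> {1..<m}"
  using valid by (cases "m = 1") (auto simp: valid_blowups_def config_first)

lemma config_card:
  "m \<in> {2..N} \<Longrightarrow> card (c m) = 1 \<or> (card (c m) = 2 \<and> c m \<in> dgraph c (m - 1))"
  using valid by (auto simp: valid_blowups_def)

lemma dgraph_edge_vertices:
  "m \<le> N \<Longrightarrow> e \<in> dgraph c m \<Longrightarrow> \<exists>x y. e = {x,y} \<and> x \<noteq> y \<and> x \<in> {1..m} \<and> y \<in> {1..m}"
proof (induction m arbitrary: e)
  case (Suc m)
  have C: "c (Suc m) \<subseteq> {1..<Suc m}" using config_earlier[of "Suc m"] Suc.prems by auto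
  from Suc.prems(2) consider "e \<in> dgraph c m" | w where "w \<in> c (Suc m)" "e = {Suc m, w}"
    by (auto split: if_splits)
  thus ?case
  proof cases
    case 1 thus ?thesis using Suc.IH[of e] Suc.prems by fastforce
  next
    case 2 thus ?thesis using C by (intro exI[of _ "Suc m"] exI[of _ w]) auto
  qed
qed simp

lemma dgraph_doubleton:
  "m \<le> N \<Longrightarrow> {a, b} \<in> dgraph c m \<Longrightarrow> a \<in> {1..m} \<and> b \<in> {1..m} \<and> a \<noteq> b"
  using dgraph_edge_vertices[of m "{a,b}"] by (auto simp: doubleton_eq_iff)

lemma dgraph_first: "dgraph c (Suc 0) = {}"
  using config_first by simp

declare dgraph.simps(2)[simp del]

lemma dgraph_Suc:
  assumes m: "Suc m \<le> N" "m \<noteq> 0"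
  defines "v \<equiv> Suc m" and "C \<equiv> c (Suc m)" and "G \<equiv> dgraph c m"
  shows "dgraph c (Suc m) = (if card C = 2 then G - {C} else G) \<union> (\<lambda>w. {v, w}) ` C"
    and "C \<subseteq> {1..<v}"
    and "\<And>p q. {p,q} \<in> G \<Longrightarrow> p \<noteq> v \<and> q \<noteq> v \<and> p \<in> {1..m} \<and> q \<in> {1..m}"
    and "card C = 1 \<or> (card C = 2 \<and> C \<in> G)"
    and "\<And>p q. {p,q} \<in> (\<lambda>w. {v, w}) ` C \<longleftrightarrow> (p = v \<and> q \<in> C) \<or> (q = v \<and> p \<in> C)"
proof -
  show "dgraph c (Suc m) = (if card C = 2 then G - {C} else G) \<union> (\<lambda>w. {v, w}) ` C"
    by (simp add: v_def C_def G_def dgraph.simps)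
  show C: "C \<subseteq> {1..<v}" using config_earlier[of v] m by (auto simp: v_def C_def)
  show "p \<noteq> v \<and> q \<noteq> v \<and> p \<in> {1..m} \<and> q \<in> {1..m}" if "{p,q} \<in> G" for p q
  proof -
    have "p \<in> {1..m} \<and> q \<in> {1..m}" using dgraph_doubleton[of m p q] m that by (simp add: G_def)
    thus ?thesis by (auto simp: v_def)
  qed
  show "card C = 1 \<or> (card C = 2 \<and> C \<in> G)" using config_card[of "Suc m"] m by (simp add: C_def G_def)
  show "\<And>p q. {p,q} \<in> (\<lambda>w. {v, w}) ` C \<longleftrightarrow> (p = v \<and> q \<in> C) \<or> (q = v \<and> p \<in> C)"
    using C by (auto simp: doubleton_eq_iff)
qed

lemma prox_column_products:
  "m \<le> N \<Longrightarrow> a \<noteq> b \<Longrightarrow>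
    (\<Sum>k=1..m. prox c k a * prox c k b) = (if {a,b} \<in> dgraph c m then -1 else 0)"
proof (induction m arbitrary: a b)
  case (Suc m)
  show ?case
  proof (cases "m = 0")
    case True
    thus ?thesis using Suc.prems config_first by (auto simp: prox_def dgraph_first)
  next
    case False
    define v C G where "v = Suc m" and "C = c (Suc m)" and "G = dgraph c m"
    note step = dgraph_Suc[OF Suc.prems(1) False, folded v_def C_def G_def]
    have step1: "dgraph c (Suc m) = (if card C = 2 then G - {C} else G) \<union> (\<lambda>w. {v, w}) ` C"
      using step(1) unfolding v_def .
    have IH: "(\<Sum>k=1..m. prox c k a * prox c k b) = (if {a,b} \<in> G then -1 else 0)"
      using Suc by (simp add: G_def)
    have sum: "(\<Sum>k=1..Suc m. prox c k a * prox c k b) =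
        (\<Sum>k=1..m. prox c k a * prox c k b) + prox c v a * prox c v b"
      by (simp add: v_def)
    have prox_v: "prox c v x = (if v = x then 1 else if x \<in> C then -1 else 0)" for x
      by (simp add: prox_def C_def v_def)
    show ?thesis
    proof (cases "a = v \<or> b = v")
      case True
      hence "{a,b} \<notin> G" using step(3)[of a b] by auto
      moreover have "prox c v a * prox c v b = (if {a,b} \<in> (\<lambda>w. {v, w}) ` C then -1 else 0)"
        using True Suc.prems(2) unfolding step(5) prox_v by auto
      ultimately show ?thesis unfolding sum IH step1 by auto
    next
      case False
      hence new: "{a,b} \<in> dgraph c (Suc m) \<longleftrightarrow> {a,b} \<in> (if card C = 2 then G - {C} else G)"
        unfolding step1 using step(5) by auto
      show ?thesis
      proof (cases "a \<in> C \<and> b \<in> C")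
        case True
        hence "card C = 2" "C \<in> G" using step(4) Suc.prems(2) by (auto simp: card_1_singleton_iff)
        moreover have "C = {a,b}"
          using True Suc.prems(2) \<open>card C = 2\<close> by (metis card_2_iff doubleton_eq_iff insertE singletonD)
        ultimately show ?thesis unfolding sum new using IH True False by (simp add: prox_v)
      next
        case notC: False
        hence "{a,b} \<in> dgraph c (Suc m) \<longleftrightarrow> {a,b} \<in> G" using new by auto
        thus ?thesis unfolding sum using IH notC False by (auto simp: prox_v)
      qed
    qed
  qed
qed simp

lemma dgraph_bridge_new_edge:
  assumes m: "Suc m \<le> N" "m \<noteq> 0" and w: "w \<in> c (Suc m)"
    and IH: "\<And>x y. {x,y} \<in> dgraph c m \<Longrightarrow> x \<noteq> y \<Longrightarrow> \<exists>S. bridge_side (dgraph c m) x y S"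
  shows "\<exists>S. bridge_side (dgraph c (Suc m)) w (Suc m) S"
proof -
  define v C G where "v = Suc m" and "C = c (Suc m)" and "G = dgraph c m"
  note step = dgraph_Suc[OF m, folded v_def C_def G_def]
  have step1: "dgraph c (Suc m) = (if card C = 2 then G - {C} else G) \<union> (\<lambda>w. {v, w}) ` C"
    using step(1) unfolding v_def .
  have wv: "w \<noteq> v" and wC: "w \<in> C" using step(2) w by (auto simp: C_def)
  from step(4) show ?thesis
  proof
    assume "card C = 1"
    hence Cw: "C = {w}" using wC by (auto simp: card_1_singleton_iff)
    have "bridge_side (dgraph c (Suc m)) w v (- {v})"
      unfolding bridge_side_def
    proof (intro conjI allI impI)
      fix u w' assume e: "{u, w'} \<in> dgraph c (Suc m)" and u: "u \<in> - {v}" and w': "w' \<notin> - {v}"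
      have "{u,w'} \<notin> G" using step(3)[of u w'] w' by auto
      hence "{u,w'} \<in> (\<lambda>w. {v, w}) ` C" using e[unfolded step1] by (auto split: if_splits)
      thus "{u, w'} = {w, v}" using step(5) u w' Cw by auto
    qed (use wv in auto)
    thus ?thesis by (auto simp: v_def)
  next
    assume C2: "card C = 2 \<and> C \<in> G"
    then obtain w2 where Cww: "C = {w, w2}" and w2: "w2 \<noteq> w"
      using wC by (metis card_2_iff insertE singletonD insert_commute)
    obtain S0 where S0: "bridge_side G w w2 S0" using IH[of w w2] C2 Cww w2 by (auto simp: G_def)
    have "bridge_side (dgraph c (Suc m)) w v (S0 - {v})"
      unfolding bridge_side_def
    proof (intro conjI allI impI)
      fix u w' assume e: "{u, w'} \<in> dgraph c (Suc m)" and u: "u \<in> S0 - {v}" and w': "w' \<notin> S0 - {v}"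
      show "{u, w'} = {w, v}"
      proof (cases "{u,w'} \<in> G - {C}")
        case True
        hence "w' \<noteq> v" using step(3)[of u w'] by auto
        hence "{u,w'} = {w,w2}" using S0 True u w' unfolding bridge_side_def by auto
        thus ?thesis using True Cww by auto
      next
        case False
        hence "{u,w'} \<in> (\<lambda>w. {v, w}) ` C" using e[unfolded step1] C2 by auto
        hence "w' = v \<and> u \<in> C" using step(5) u by auto
        thus ?thesis using S0 Cww u by (auto simp: bridge_side_def)
      qed
    qed (use S0 wv in \<open>auto simp: bridge_side_def\<close>)
    thus ?thesis by (auto simp: v_def)
  qed
qed

lemma dgraph_bridge_old_edge:
  assumes m: "Suc m \<le> N" "m \<noteq> 0"
    and xy: "{x,y} \<in> (if card (c (Suc m)) = 2 then dgraph c m - {c (Suc m)} else dgraph c m)"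
    and S0: "bridge_side (dgraph c m) x y S0"
  shows "\<exists>S. bridge_side (dgraph c (Suc m)) x y S"
proof -
  define v C G where "v = Suc m" and "C = c (Suc m)" and "G = dgraph c m"
  note step = dgraph_Suc[OF m, folded v_def C_def G_def]
  have step1: "dgraph c (Suc m) = (if card C = 2 then G - {C} else G) \<union> (\<lambda>w. {v, w}) ` C"
    using step(1) unfolding v_def .
  have xyG: "{x,y} \<in> G" using xy by (auto simp: G_def split: if_splits)
  have xv: "x \<noteq> v" "y \<noteq> v" using step(3)[OF xyG] by auto
  have cut: "\<And>u w. {u,w} \<in> G \<Longrightarrow> u \<in> S0 \<Longrightarrow> w \<notin> S0 \<Longrightarrow> {u,w} = {x,y}"
    using S0 by (simp add: bridge_side_def G_def)
  \<comment> \<open>the centre v is attached to all of C, which lies on one side of the old cut\<close>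
  have same_side: "p \<in> S0 \<longleftrightarrow> q \<in> S0" if pq: "p \<in> C" "q \<in> C" for p q
  proof (cases "p = q")
    case False
    hence C2: "card C = 2" "C \<in> G" using step(4) pq by (auto simp: card_1_singleton_iff)
    hence Cpq: "C = {p,q}" using pq False by (metis card_2_iff doubleton_eq_iff insertE singletonD)
    have ne: "{p,q} \<noteq> {x,y}" "{q,p} \<noteq> {x,y}" using xy C2 Cpq by (auto simp: C_def G_def insert_commute)
    have "{p,q} \<in> G" "{q,p} \<in> G" using C2 Cpq by (auto simp: insert_commute)
    thus ?thesis using cut ne by blast
  qed simp
  define S where "S = (if \<exists>z\<in>C. z \<in> S0 then insert v S0 else S0 - {v})"
  have S_old: "z \<in> S \<longleftrightarrow> z \<in> S0" if "z \<noteq> v" for z using that by (auto simp: S_def)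
  have "bridge_side (dgraph c (Suc m)) x y S"
    unfolding bridge_side_def
  proof (intro conjI allI impI)
    fix u w' assume e: "{u, w'} \<in> dgraph c (Suc m)" and u: "u \<in> S" and w': "w' \<notin> S"
    show "{u, w'} = {x, y}"
    proof (cases "{u,w'} \<in> G")
      case True
      hence "u \<noteq> v" "w' \<noteq> v" using step(3) by auto
      thus ?thesis using cut True u w' S_old by (auto simp: G_def)
    next
      case False
      hence "{u,w'} \<in> (\<lambda>w. {v, w}) ` C" using e[unfolded step1] by (auto split: if_splits)
      hence "(u = v \<and> w' \<in> C) \<or> (w' = v \<and> u \<in> C)" using step(5) by auto
      moreover have "v \<notin> C" using step(2) by auto
      ultimately consider "u = v" "w' \<in> C" "w' \<noteq> v" | "w' = v" "u \<in> C" "u \<noteq> v" by blast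
      hence False
      proof cases
        case 1
        hence "\<exists>z\<in>C. z \<in> S0" using u by (auto simp: S_def split: if_splits)
        hence "w' \<in> S0" using same_side 1 by blast
        thus False using S_old[OF 1(3)] w' by simp
      next
        case 2
        hence "u \<in> S0" using S_old u by simp
        hence "v \<in> S" using 2 by (auto simp: S_def)
        thus False using w' 2 by simp
      qed
      thus ?thesis ..
    qed
  next
    show "x \<in> S" "y \<notin> S" using S0 S_old xv by (auto simp: bridge_side_def)
  qed
  thus ?thesis ..
qed

text \<open>Every edge is a bridge; with dgraph_connected, the dual graph is a tree.\<close>

lemma dgraph_bridge:
  "m \<le> N \<Longrightarrow> {x,y} \<in> dgraph c m \<Longrightarrow> x \<noteq> y \<Longrightarrow> \<exists>S. bridge_side (dgraph c m) x y S"
proof (induction m arbitrary: x y)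
  case (Suc m)
  show ?case
  proof (cases "m = 0")
    case True thus ?thesis using Suc.prems dgraph_first by simp
  next
    case False
    have IH: "\<And>x y. {x,y} \<in> dgraph c m \<Longrightarrow> x \<noteq> y \<Longrightarrow> \<exists>S. bridge_side (dgraph c m) x y S"
      using Suc by simp
    note step = dgraph_Suc[OF Suc.prems(1) False]
    from Suc.prems(2)[unfolded step(1)] consider
        (new) w where "w \<in> c (Suc m)" "{x,y} = {Suc m, w}"
      | (old) "{x,y} \<in> (if card (c (Suc m)) = 2 then dgraph c m - {c (Suc m)} else dgraph c m)"
      by auto
    thus ?thesis
    proof cases
      case new
      note bridge = dgraph_bridge_new_edge[OF Suc.prems(1) False new(1) IH]
      from new(2) consider "x = Suc m" "y = w" | "x = w" "y = Suc m" by (auto simp: doubleton_eq_iff)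
      thus ?thesis using bridge bridge_side_Compl by cases blast+
    next
      case old
      hence "{x,y} \<in> dgraph c m" by (auto split: if_splits)
      with IH Suc.prems(3) obtain S0 where "bridge_side (dgraph c m) x y S0" by blast
      thus ?thesis by (rule dgraph_bridge_old_edge[OF Suc.prems(1) False old])
    qed
  qed
qed simp

lemma dgraph_connected: "m \<le> N \<Longrightarrow> x \<in> {1..m} \<Longrightarrow> (\<lambda>a b. {a,b} \<in> dgraph c m)\<^sup>*\<^sup>* x 1"
proof (induction m arbitrary: x)
  case (Suc m)
  show ?case
  proof (cases "m = 0")
    case True thus ?thesis using Suc.prems by simp
  next
    case False
    define v C G where "v = Suc m" and "C = c (Suc m)" and "G = dgraph c m"
    note step = dgraph_Suc[OF Suc.prems(1) False, folded v_def C_def G_def]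
    have step1: "dgraph c (Suc m) = (if card C = 2 then G - {C} else G) \<union> (\<lambda>w. {v, w}) ` C"
      using step(1) unfolding v_def .
    let ?E = "\<lambda>a b. {a,b} \<in> dgraph c (Suc m)"
    have to_v: "?E v w" "?E w v" if "w \<in> C" for w
      unfolding step1 using step(5)[of v w] step(5)[of w v] that by auto
    have "?E\<^sup>*\<^sup>* a b" if "{a,b} \<in> G" for a b
    proof (cases "?E a b")
      case False
      hence "{a,b} = C" using that step(3)[OF that] unfolding step1 by (auto split: if_splits)
      thus ?thesis using to_v by (meson insertI1 insertI2 rtranclp.rtrancl_into_rtrancl rtranclp.rtrancl_refl)
    qed auto
    hence old: "?E\<^sup>*\<^sup>* y 1" if "y \<in> {1..m}" for y
      using rtranclp_subsumed[of "\<lambda>a b. {a,b} \<in> dgraph c m" ?E y 1] Suc.IH[of y] Suc.prems that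
      by (simp add: G_def)
    show ?thesis
    proof (cases "x = v")
      case True
      obtain w where w: "w \<in> C" using step(4) by fastforce
      hence "w \<in> {1..m}" using step(2) by (auto simp: v_def)
      thus ?thesis using old to_v[OF w] True by (meson converse_rtranclp_into_rtranclp)
    qed (use old Suc.prems in \<open>auto simp: v_def\<close>)
  qed
qed simp

lemma Qrow_eq: "a \<in> {1..N} \<Longrightarrow> Qrow c a t = (if a = t then 1 else 0) + (\<Sum>b\<in>c a. Qrow c b t)"
proof -
  assume a: "a \<in> {1..N}"
  have "{b\<in>c a. b < a} = c a" using config_earlier[OF a] by auto
  thus ?thesis by (subst Qrow.simps) simp
qed

lemma Qrow_first_ge1: "a \<in> {1..N} \<Longrightarrow> Qrow c a 1 \<ge> 1"
proof (induction a rule: less_induct)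
  case (less a)
  show ?case
  proof (cases "a = 1")
    case False
    hence "card (c a) \<ge> 1" using config_card[of a] less.prems by auto
    hence fin: "finite (c a)" and "c a \<noteq> {}" by (auto intro: card_ge_0_finite)
    then obtain b where b: "b \<in> c a" by blast
    have b': "b \<in> {1..N}" "b < a" using config_earlier[OF less.prems] b less.prems by auto
    have "1 \<le> Qrow c b 1" using less.IH[OF b'(2) b'(1)] .
    also have "\<dots> \<le> (\<Sum>b\<in>c a. Qrow c b 1)" by (rule member_le_sum[OF b _ fin]) (simp add: Qrow_nonneg)
    also have "\<dots> \<le> Qrow c a 1" using Qrow_eq[OF less.prems] False by simp
    finally show ?thesis .
  qed (use Qrow_diag in simp)
qed

lemma prox_Qrow_inverse:
  "i \<in> {1..N} \<Longrightarrow> j \<in> {1..N} \<Longrightarrow> (\<Sum>k=1..N. prox c i k * Qrow c k j) = (if i = j then 1 else 0)"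
proof -
  assume i: "i \<in> {1..N}" and j: "j \<in> {1..N}"
  have sub: "c i \<subseteq> {1..N}" and nii: "i \<notin> c i" using config_earlier[OF i] i by auto
  have "(\<Sum>k=1..N. prox c i k * Qrow c k j) =
      (\<Sum>k=1..N. (if i = k then Qrow c k j else 0) - (if k \<in> c i then Qrow c k j else 0))"
    by (rule sum.cong) (auto simp: prox_def nii)
  also have "\<dots> = Qrow c i j - (\<Sum>k\<in>c i. Qrow c k j)"
    using i sub by (simp add: sum_subtractf sum.inter_restrict[symmetric] Int_absorb1)
  also have "\<dots> = (if i = j then 1 else 0)" using Qrow_eq[OF i] by simp
  finally show ?thesis .
qed

lemma Qrow_prox_inverse:
  "i \<in> {1..N} \<Longrightarrow> j \<in> {1..N} \<Longrightarrow> (\<Sum>k=1..N. Qrow c i k * prox c k j) = (if i = j then 1 else 0)"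
  by (rule matrix_left_inverse_of_right_inverse[of N "prox c" "Qrow c", OF prox_Qrow_inverse])

lemma Qmat_eq: "i \<in> {1..N} \<Longrightarrow> j \<in> {1..N} \<Longrightarrow> Qmat N c i j = Qrow c i j"
  unfolding Qmat_def by (rule mat_inv_eqI[OF prox_Qrow_inverse])

definition Vr :: "nat \<Rightarrow> nat \<Rightarrow> real" where
  "Vr a b = (\<Sum>k=1..N. Qrow c a k * Qrow c b k)"

lemma PtP_Vr_inverse:
  assumes i: "i \<in> {1..N}" and j: "j \<in> {1..N}"
  shows "(\<Sum>k=1..N. PtP N c i k * Vr k j) = (if i = j then 1 else 0)"
proof -
  let ?P = "prox c" and ?Q = "Qrow c"
  have "(\<Sum>k=1..N. PtP N c i k * Vr k j) =
      (\<Sum>k=1..N. \<Sum>l=1..N. \<Sum>m=1..N. ?P m i * (?P m k * ?Q k l) * ?Q j l)"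
    by (simp add: PtP_def Vr_def sum_distrib_left sum_distrib_right mult_ac)
  also have "\<dots> = (\<Sum>m=1..N. \<Sum>l=1..N. \<Sum>k=1..N. ?P m i * (?P m k * ?Q k l) * ?Q j l)"
    by (subst sum.swap, subst sum.swap, rule sum.cong[OF refl], rule sum.swap)
  also have "\<dots> = (\<Sum>m=1..N. \<Sum>l=1..N. ?P m i * (\<Sum>k=1..N. ?P m k * ?Q k l) * ?Q j l)"
    by (simp add: sum_distrib_left sum_distrib_right)
  also have "\<dots> = (\<Sum>m=1..N. \<Sum>l=1..N. ?P m i * (if m = l then 1 else 0) * ?Q j l)"
  proof (intro sum.cong refl)
    fix m l assume "m \<in> {1..N}" "l \<in> {1..N}"
    thus "?P m i * (\<Sum>k=1..N. ?P m k * ?Q k l) * ?Q j l = ?P m i * (if m = l then 1 else 0) * ?Q j l"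
      using prox_Qrow_inverse[of m l] by simp
  qed
  also have "\<dots> = (\<Sum>m=1..N. ?Q j m * ?P m i)"
  proof (intro sum.cong refl)
    fix m assume "m \<in> {1..N}"
    have "(\<Sum>l=1..N. ?P m i * (if m = l then 1 else 0) * ?Q j l) =
        (\<Sum>l=1..N. if m = l then ?P m i * ?Q j l else 0)"
      by (rule sum.cong) auto
    thus "(\<Sum>l=1..N. ?P m i * (if m = l then 1 else 0) * ?Q j l) = ?Q j m * ?P m i"
      using \<open>m \<in> {1..N}\<close> by (simp add: sum.delta)
  qed
  also have "\<dots> = (if i = j then 1 else 0)" using Qrow_prox_inverse[OF j i] by auto
  finally show ?thesis .
qed

lemma Vmat_eq: "i \<in> {1..N} \<Longrightarrow> j \<in> {1..N} \<Longrightarrow> Vmat N c i j = Vr i j"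
  unfolding Vmat_def by (rule mat_inv_eqI[OF PtP_Vr_inverse])

lemma Vr_ge1: "a \<in> {1..N} \<Longrightarrow> b \<in> {1..N} \<Longrightarrow> Vr a b \<ge> 1"
proof -
  assume a: "a \<in> {1..N}" and b: "b \<in> {1..N}"
  have "1 \<le> Qrow c a 1 * Qrow c b 1"
    using Qrow_first_ge1[OF a] Qrow_first_ge1[OF b] mult_mono[of 1 "Qrow c a 1" 1 "Qrow c b 1"] by simp
  also have "\<dots> \<le> Vr a b" unfolding Vr_def using a
    by (intro member_le_sum) (auto intro: mult_nonneg_nonneg Qrow_nonneg)
  finally show ?thesis .
qed

lemma kcoef_ge1: "n \<in> {1..N} \<Longrightarrow> kcoef N c n \<ge> 1"
proof -
  assume n: "n \<in> {1..N}"
  have "kcoef N c n = (\<Sum>k=1..N. Qrow c n k)" unfolding kcoef_def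
    by (rule sum.cong[OF refl]) (use Qmat_eq[OF n] in blast)
  also have "\<dots> \<ge> Qrow c n n" by (rule member_le_sum[OF n]) (auto simp: Qrow_nonneg)
  finally show ?thesis using Qrow_diag[of c n] by linarith
qed

lemma quad_form_PtP: "quad_form N (PtP N c) x = (\<Sum>k=1..N. (\<Sum>b=1..N. prox c k b * x b)\<^sup>2)"
proof -
  have "quad_form N (PtP N c) x =
      (\<Sum>b=1..N. \<Sum>t=1..N. \<Sum>k=1..N. (prox c k b * x b) * (prox c k t * x t))"
    by (simp add: quad_form_def PtP_def sum_distrib_left sum_distrib_right mult_ac)
  also have "\<dots> = (\<Sum>k=1..N. \<Sum>b=1..N. \<Sum>t=1..N. (prox c k b * x b) * (prox c k t * x t))"
    by (subst sum.swap, rule sum.cong[OF refl], rule sum.swap)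
  finally show ?thesis by (simp add: power2_eq_square sum_product)
qed

lemma PtP_posdef: "posdef_on N (PtP N c)"
  unfolding posdef_on_def
proof (intro allI impI ballI)
  fix x :: "nat \<Rightarrow> real" and t assume "quad_form N (PtP N c) x \<le> 0" and t: "t \<in> {1..N}"
  hence "(\<Sum>k=1..N. (\<Sum>b=1..N. prox c k b * x b)\<^sup>2) = 0"
    unfolding quad_form_PtP by (simp add: sum_nonneg antisym)
  hence Px: "(\<Sum>b=1..N. prox c k b * x b) = 0" if "k \<in> {1..N}" for k
    using that by (subst (asm) sum_nonneg_eq_0_iff) auto
  have "x t = (\<Sum>b=1..N. if t = b then x b else 0)" using t by (simp add: sum.delta)
  also have "\<dots> = (\<Sum>b=1..N. (\<Sum>k=1..N. Qrow c t k * prox c k b) * x b)"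
    by (intro sum.cong refl) (use Qrow_prox_inverse[OF t] in simp)
  also have "\<dots> = (\<Sum>k=1..N. Qrow c t k * (\<Sum>b=1..N. prox c k b * x b))"
    by (simp add: sum_distrib_left sum_distrib_right mult_ac) (rule sum.swap)
  also have "\<dots> = 0" using Px by simp
  finally show "x t = 0" .
qed

lemma adj_sym: "adj N c a b \<Longrightarrow> adj N c b a"
  by (auto simp: adj_def insert_commute)

lemma adj_vertices: "adj N c a b \<Longrightarrow> a \<in> {1..N} \<and> b \<in> {1..N}"
  using dgraph_doubleton[of N a b] by (auto simp: adj_def)

lemma PtP_offdiag: "a \<noteq> b \<Longrightarrow> PtP N c a b = (if adj N c a b then -1 else 0)"
  using prox_column_products[of N a b] by (simp add: PtP_def adj_def)

lemma PtP_offdiag_nonpos: "a \<noteq> b \<Longrightarrow> PtP N c a b \<le> 0"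
  using PtP_offdiag[of a b] by simp

lemma adj_bridge: "adj N c x y \<Longrightarrow>
    \<exists>S. x \<in> S \<and> y \<notin> S \<and> (\<forall>u w. adj N c u w \<longrightarrow> u \<in> S \<longrightarrow> w \<notin> S \<longrightarrow> {u,w} = {x,y})"
  using dgraph_bridge[of N x y] by (auto simp: adj_def bridge_side_def)

lemma adj_connected: "a \<in> {1..N} \<Longrightarrow> b \<in> {1..N} \<Longrightarrow> (adj N c)\<^sup>*\<^sup>* a b"
proof -
  assume a: "a \<in> {1..N}" and b: "b \<in> {1..N}"
  have edge: "(adj N c)\<^sup>*\<^sup>* p q" if "{p,q} \<in> dgraph c N" for p q
    using that dgraph_doubleton[OF order_refl that] by (simp add: adj_def r_into_rtranclp)
  have to_first: "(adj N c)\<^sup>*\<^sup>* x 1" if "x \<in> {1..N}" for x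
    using rtranclp_subsumed[OF edge dgraph_connected[OF order_refl that]] .
  have "(adj N c)\<^sup>*\<^sup>* y x" if "(adj N c)\<^sup>*\<^sup>* x y" for x y
    using that by (induction rule: rtranclp_induct) (auto intro: converse_rtranclp_into_rtranclp adj_sym)
  thus ?thesis using to_first[OF a] to_first[OF b] by (blast intro: rtranclp_trans)
qed

section \<open>Branches and distances\<close>

definition adj_avoiding :: "nat \<Rightarrow> nat \<Rightarrow> nat \<Rightarrow> bool" where
  "adj_avoiding p a b \<longleftrightarrow> adj N c a b \<and> a \<noteq> p \<and> b \<noteq> p"

lemma branch_iff:
  "j \<in> branch N c p q \<longleftrightarrow> j \<in> {1..N} \<and> q \<in> {1..N} \<and> q \<noteq> p \<and> (adj_avoiding p)\<^sup>*\<^sup>* q j"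
  by (simp add: branch_def adj_avoiding_def[abs_def])

lemma branch_subset: "branch N c p q \<subseteq> {1..N}"
  by (auto simp: branch_iff)

lemma finite_branch: "finite (branch N c p q)"
  using branch_subset by (rule finite_subset) simp

lemma avoiding_walk_avoids: "(adj_avoiding p)\<^sup>*\<^sup>* q x \<Longrightarrow> q \<noteq> p \<Longrightarrow> x \<noteq> p"
  by (induction rule: rtranclp_induct) (auto simp: adj_avoiding_def)

lemma pivot_notin_branch: "p \<notin> branch N c p q"
  using avoiding_walk_avoids by (auto simp: branch_iff)

lemma branch_start: "q \<in> {1..N} \<Longrightarrow> q \<noteq> p \<Longrightarrow> q \<in> branch N c p q"
  by (simp add: branch_iff)

lemma branch_closed: "t \<in> branch N c p q \<Longrightarrow> adj N c t b \<Longrightarrow> b \<noteq> p \<Longrightarrow> b \<in> branch N c p q"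
  using pivot_notin_branch[of p q] adj_vertices[of t b]
  by (auto simp: branch_iff adj_avoiding_def intro: rtranclp.rtrancl_into_rtrancl)

lemma avoiding_walk_same_side:
  assumes cut: "\<forall>u w. adj N c u w \<longrightarrow> u \<in> S \<longrightarrow> w \<notin> S \<longrightarrow> {u,w} = {x,y}"
    and p: "p = x \<or> p = y" and walk: "(adj_avoiding p)\<^sup>*\<^sup>* a b"
  shows "a \<in> S \<longleftrightarrow> b \<in> S"
  using walk
proof (induction rule: rtranclp_induct)
  case (step z b)
  have zb: "adj N c z b" "adj N c b z" "z \<noteq> p" "b \<noteq> p"
    using step(2) adj_sym by (auto simp: adj_avoiding_def)
  have "{z,b} \<noteq> {x,y}" "{b,z} \<noteq> {x,y}" using p zb by (auto simp: doubleton_eq_iff)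
  hence "z \<in> S \<longleftrightarrow> b \<in> S" using cut zb(1,2) by blast
  thus ?case using step(3) by simp
qed simp

lemma branches_at_vertex_disjoint:
  assumes i1: "adj N c i1 m" and i2: "adj N c i2 m" and ne: "i1 \<noteq> i2"
  shows "branch N c m i1 \<inter> branch N c m i2 = {}"
proof -
  obtain S where S: "i1 \<in> S" "m \<notin> S"
    and cut: "\<forall>u w. adj N c u w \<longrightarrow> u \<in> S \<longrightarrow> w \<notin> S \<longrightarrow> {u,w} = {i1,m}"
    using adj_bridge[OF i1] by blast
  have "i2 \<notin> S"
  proof
    assume "i2 \<in> S" hence "{i2,m} = {i1,m}" using cut i2 S(2) by blast
    thus False using ne i2 by (auto simp: doubleton_eq_iff adj_def)
  qed
  hence "j \<in> S" "j \<notin> S" if "j \<in> branch N c m i1" "j \<in> branch N c m i2" for j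
    using that avoiding_walk_same_side[OF cut, of m] S by (auto simp: branch_iff)
  thus ?thesis by blast
qed

lemma branch_disjoint_off_path:
  assumes im: "adj N c i m"
    and off: "n = m \<or> (\<exists>i0. adj N c i0 m \<and> i0 \<noteq> i \<and> (adj_avoiding m)\<^sup>*\<^sup>* i0 n)"
  shows "branch N c m i \<inter> branch N c i n = {}"
proof -
  obtain S where S: "i \<in> S" "m \<notin> S"
    and cut: "\<forall>u w. adj N c u w \<longrightarrow> u \<in> S \<longrightarrow> w \<notin> S \<longrightarrow> {u,w} = {i,m}"
    using adj_bridge[OF im] by blast
  have "n \<notin> S" using off
  proof
    assume "\<exists>i0. adj N c i0 m \<and> i0 \<noteq> i \<and> (adj_avoiding m)\<^sup>*\<^sup>* i0 n"
    then obtain i0 where i0: "adj N c i0 m" "i0 \<noteq> i" "(adj_avoiding m)\<^sup>*\<^sup>* i0 n" by blast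
    have "i0 \<notin> S"
    proof
      assume "i0 \<in> S" hence "{i0,m} = {i,m}" using cut i0(1) S(2) by blast
      thus False using i0(2) im by (auto simp: doubleton_eq_iff adj_def)
    qed
    thus ?thesis using avoiding_walk_same_side[OF cut _ i0(3)] by simp
  qed (use S in simp)
  hence "j \<in> S" "j \<notin> S" if "j \<in> branch N c m i" "j \<in> branch N c i n" for j
    using that avoiding_walk_same_side[OF cut, of m] avoiding_walk_same_side[OF cut, of i] S
    by (auto simp: branch_iff)
  thus ?thesis by blast
qed

lemma branch_subset_of_path:
  assumes mi: "adj N c m i" and walk: "(adj_avoiding m)\<^sup>*\<^sup>* i n"
  shows "branch N c i n \<subseteq> branch N c m i"
proof
  fix j assume "j \<in> branch N c i n"
  hence j: "j \<in> {1..N}" "(adj_avoiding i)\<^sup>*\<^sup>* n j" by (auto simp: branch_iff)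
  obtain S where S: "m \<in> S" "i \<notin> S"
    and cut: "\<forall>u w. adj N c u w \<longrightarrow> u \<in> S \<longrightarrow> w \<notin> S \<longrightarrow> {u,w} = {m,i}"
    using adj_bridge[OF mi] by blast
  have "n \<notin> S" using avoiding_walk_same_side[OF cut _ walk] S by simp
  moreover have "w \<notin> S" if "adj_avoiding i u w" "u \<notin> S" for u w
    using avoiding_walk_same_side[OF cut _ r_into_rtranclp[of "adj_avoiding i", OF that(1)]] that(2) by simp
  ultimately have "(\<lambda>u w. adj_avoiding i u w \<and> u \<notin> S \<and> w \<notin> S)\<^sup>*\<^sup>* n j"
    by (intro rtranclp_restrict_invariant[OF j(2)])
  hence "(adj_avoiding m)\<^sup>*\<^sup>* n j"
    by (rule rtranclp_mono[THEN predicate2D, rotated]) (use S(1) in \<open>auto simp: adj_avoiding_def\<close>)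
  hence "(adj_avoiding m)\<^sup>*\<^sup>* i j" using walk by (rule rtranclp_trans[rotated])
  moreover have "i \<in> {1..N}" "i \<noteq> m" using adj_vertices[OF mi] mi by (auto simp: adj_def)
  ultimately show "j \<in> branch N c m i" using j(1) by (simp add: branch_iff)
qed

lemma gdist_walk: "a \<in> {1..N} \<Longrightarrow> b \<in> {1..N} \<Longrightarrow> (adj N c ^^ gdist N c a b) a b"
proof -
  assume "a \<in> {1..N}" "b \<in> {1..N}"
  then obtain k where "(adj N c ^^ k) a b" using rtranclp_imp_relpowp[OF adj_connected] by blast
  thus ?thesis unfolding gdist_def by (rule LeastI)
qed

lemma gdist_le: "(adj N c ^^ k) a b \<Longrightarrow> gdist N c a b \<le> k"
  unfolding gdist_def by (rule Least_le)

lemma gdist_le1: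
  assumes m: "m \<in> {1..N}" and n: "n \<in> {1..N}" and d: "gdist N c m n \<le> 1"
  shows "n = m \<or> adj N c m n"
proof (cases "gdist N c m n")
  case 0 thus ?thesis using gdist_walk[OF m n] by simp
next
  case (Suc k)
  hence "gdist N c m n = Suc 0" using d by simp
  thus ?thesis using gdist_walk[OF m n] by auto
qed

lemma gdist_first_step:
  assumes m: "m \<in> {1..N}" and n: "n \<in> {1..N}" and d: "gdist N c m n \<ge> 2"
  obtains i where "adj N c m i" "gdist N c i n + 1 = gdist N c m n"
proof -
  obtain k where k: "gdist N c m n = Suc k" using d by (cases "gdist N c m n") auto
  hence "(adj N c ^^ Suc k) m n" using gdist_walk[OF m n] by simp
  then obtain i where i: "adj N c m i" "(adj N c ^^ k) i n"
    using relpowp_Suc_D2[where P = "adj N c"] by blast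
  have "i \<in> {1..N}" using adj_vertices[OF i(1)] by simp
  hence "(adj N c ^^ Suc (gdist N c i n)) m n" by (rule relpowp_Suc_I2[OF i(1) gdist_walk[OF _ n]])
  hence "gdist N c m n \<le> Suc (gdist N c i n)" by (rule gdist_le)
  moreover have "gdist N c i n \<le> k" using gdist_le[OF i(2)] .
  ultimately show ?thesis using that i(1) k by simp
qed

lemma geodesic_avoids_start:
  assumes m: "m \<in> {1..N}" and n: "n \<in> {1..N}"
    and i: "adj N c m i" and gi: "gdist N c i n + 1 = gdist N c m n"
  shows "(adj_avoiding m)\<^sup>*\<^sup>* i n"
proof -
  have "i \<in> {1..N}" "i \<noteq> m" using adj_vertices[OF i] i by (auto simp: adj_def)
  from walk_avoids_or_passes_through[OF gdist_walk[OF this(1) n] this(2)] show ?thesis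
  proof
    assume "\<exists>k'<gdist N c i n. (adj N c ^^ k') m n"
    hence "gdist N c m n < gdist N c i n" using gdist_le by (meson le_less_trans)
    thus ?thesis using gi by simp
  qed (simp add: adj_avoiding_def[abs_def])
qed

lemma branches_overlap_free_iff:
  assumes m: "m \<in> {1..N}" and n: "n \<in> {1..N}"
  shows "(\<forall>i. adj N c i m \<longrightarrow> (\<forall>j \<in> branch N c m i \<inter> branch N c i n. P j)) \<longleftrightarrow>
    gdist N c m n \<le> 1 \<or>
    (\<exists>i. adj N c m i \<and> gdist N c i n + 1 = gdist N c m n \<and> (\<forall>j\<in>branch N c i n. P j))"
    (is "?overlap_free \<longleftrightarrow> ?near \<or> ?path")
proof
  assume free: ?overlap_free
  show "?near \<or> ?path"
  proof (cases ?near)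
    case False
    hence "gdist N c m n \<ge> 2" by simp
    then obtain i where i: "adj N c m i" "gdist N c i n + 1 = gdist N c m n"
      by (rule gdist_first_step[OF m n])
    have "branch N c i n \<subseteq> branch N c m i"
      using branch_subset_of_path[OF i(1) geodesic_avoids_start[OF m n i]] .
    thus ?thesis using free i adj_sym[OF i(1)] by blast
  qed simp
next
  assume near_or_path: "?near \<or> ?path"
  show ?overlap_free
  proof (intro allI impI ballI)
    fix i j assume im: "adj N c i m" and j: "j \<in> branch N c m i \<inter> branch N c i n"
    hence on_path: "\<not> (n = m \<or> (\<exists>i0. adj N c i0 m \<and> i0 \<noteq> i \<and> (adj_avoiding m)\<^sup>*\<^sup>* i0 n))"
      using branch_disjoint_off_path[OF im] by blast
    from near_or_path show "P j"
    proof
      assume ?near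
      hence "adj N c n m" using gdist_le1[OF m n] on_path adj_sym by blast
      moreover have "n \<noteq> i" using j by (auto simp: branch_iff)
      moreover have "(adj_avoiding m)\<^sup>*\<^sup>* n n" by simp
      ultimately show ?thesis using on_path by blast
    next
      assume ?path
      then obtain i' where i': "adj N c m i'" "gdist N c i' n + 1 = gdist N c m n"
        "\<forall>j\<in>branch N c i' n. P j" by blast
      have "i' = i"
      proof (rule ccontr)
        assume "i' \<noteq> i"
        thus False using on_path adj_sym[OF i'(1)] geodesic_avoids_start[OF m n i'(1,2)] by blast
      qed
      thus ?thesis using i'(3) j by blast
    qed
  qed
qed

section \<open>The Schur complement of V\<close>

definition Vschur :: "nat \<Rightarrow> nat \<Rightarrow> nat \<Rightarrow> real" where
  "Vschur i t n = Vr t n - Vr t i * (Vr i n / Vr i i)"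

context
  fixes i n :: nat
  assumes i: "i \<in> {1..N}" and n: "n \<in> {1..N}"
begin

lemma Vschur_pivot: "Vschur i i n = 0"
  using Vr_ge1[OF i i] by (simp add: Vschur_def)

lemma PtP_Vschur:
  assumes b: "b \<in> {1..N}"
  shows "(\<Sum>t=1..N. PtP N c b t * Vschur i t n) =
    (if b = n then 1 else 0) - Vr i n / Vr i i * (if b = i then 1 else 0)"
proof -
  have "(\<Sum>t=1..N. PtP N c b t * Vschur i t n) =
      (\<Sum>t=1..N. PtP N c b t * Vr t n) - Vr i n / Vr i i * (\<Sum>t=1..N. PtP N c b t * Vr t i)"
    by (simp add: Vschur_def algebra_simps sum_subtractf sum_distrib_left)
  thus ?thesis using PtP_Vr_inverse[OF b n] PtP_Vr_inverse[OF b i] by simp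
qed

lemma Vschur_nonneg: "t \<in> {1..N} \<Longrightarrow> Vschur i t n \<ge> 0"
proof (rule nonneg_if_superharmonic_where_negative[OF PtP_offdiag_nonpos PtP_posdef, of "\<lambda>t. Vschur i t n"])
  fix b assume b: "b \<in> {1..N}" "Vschur i b n < 0"
  hence "b \<noteq> i" using Vschur_pivot by auto
  thus "(\<Sum>t=1..N. PtP N c b t * Vschur i t n) \<ge> 0" using PtP_Vschur[OF b(1)] by simp
qed

lemma Vschur_outside_branch:
  assumes j: "j \<in> {1..N}" "j \<notin> branch N c i n"
  shows "Vschur i j n = 0"
proof (cases "j = i")
  case False
  let ?C = "{1..N} - branch N c i n - {i}"
  show ?thesis
  proof (rule vanishes_if_harmonic_on_sealed_set[OF PtP_posdef, of ?C "\<lambda>t. Vschur i t n"])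
    fix b assume b: "b \<in> ?C"
    hence "b \<noteq> n" using branch_start[OF n] by (cases "n = i") auto
    thus "(\<Sum>t=1..N. PtP N c b t * Vschur i t n) = 0" using b PtP_Vschur[of b] by simp
  next
    fix b t assume b: "b \<in> ?C" and t: "t \<in> {1..N}" "t \<notin> ?C"
    show "PtP N c b t * Vschur i t n = 0"
    proof (cases "t = i")
      case False
      hence "t \<in> branch N c i n" using t by auto
      hence "\<not> adj N c t b" "b \<noteq> t" using branch_closed b by auto
      thus ?thesis using PtP_offdiag[of b t] adj_sym by auto
    qed (simp add: Vschur_pivot)
  qed (use j False in auto)
qed (simp add: Vschur_pivot)

lemma Vschur_branch_pos:
  assumes j: "j \<in> branch N c i n"
  shows "Vschur i j n > 0"
proof -
  have spread: "x \<noteq> n \<and> (\<forall>t. adj N c x t \<longrightarrow> Vschur i t n = 0)"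
    if x: "x \<in> {1..N}" "x \<noteq> i" "Vschur i x n = 0" for x
  proof -
    have super: "(\<Sum>t=1..N. PtP N c x t * Vschur i t n) \<ge> 0" using x PtP_Vschur[OF x(1)] by simp
    note zero = zero_of_nonneg_superharmonic_spreads[where y = "\<lambda>t. Vschur i t n" and M = "PtP N c" and N = N and x = x, OF PtP_offdiag_nonpos Vschur_nonneg x(3) super]
    have "x \<noteq> n" using zero(1) x PtP_Vschur[OF x(1)] by (simp split: if_splits)
    moreover have "Vschur i t n = 0" if "adj N c x t" for t
      using zero(2)[of t] PtP_offdiag[of x t] that adj_vertices[OF that] by (auto simp: adj_def)
    ultimately show ?thesis by blast
  qed
  have walk: "n \<noteq> i" "(adj_avoiding i)\<^sup>*\<^sup>* n j" using j by (auto simp: branch_iff)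
  have "Vschur i x n > 0" if "(adj_avoiding i)\<^sup>*\<^sup>* n x" for x
    using that
  proof (induction rule: rtranclp_induct)
    case base
    show ?case using spread[OF n walk(1)] Vschur_nonneg[OF n] by fastforce
  next
    case (step x x')
    hence x': "x' \<in> {1..N}" "x' \<noteq> i" "adj N c x' x"
      using adj_vertices adj_sym by (auto simp: adj_avoiding_def)
    show ?case using spread[OF x'(1,2)] x'(3) step.IH Vschur_nonneg[OF x'(1)] by fastforce
  qed
  thus ?thesis using walk(2) .
qed

end

section \<open>The modified divisor\<close>

lemma ecoef_Vr: "n \<in> {1..N} \<Longrightarrow> ecoef N c h n = (\<Sum>t=1..N. h t * Vr t n)"
  unfolding ecoef_def by (rule sum.cong[OF refl]) (simp add: Vmat_eq)

lemma ecoef_hatc: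
  assumes n: "n \<in> {1..N}"
  shows "ecoef N c (hatc N c F) n = F n"
proof -
  have "ecoef N c (hatc N c F) n = (\<Sum>l=1..N. F l * (\<Sum>t=1..N. PtP N c l t * Vr t n))"
    unfolding ecoef_Vr[OF n] hatc_def
    by (simp add: sum_distrib_left sum_distrib_right mult.assoc) (rule sum.swap)
  also have "\<dots> = (\<Sum>l=1..N. if l = n then F l else 0)"
    by (intro sum.cong refl) (use PtP_Vr_inverse n in simp)
  also have "\<dots> = F n" using n by (simp add: sum.delta')
  finally show ?thesis .
qed

lemma antinef_nonneg:
  assumes F: "antinef N c F" and n: "n \<in> {1..N}"
  shows "F n \<ge> 0"
proof -
  have "F n = (\<Sum>t=1..N. hatc N c F t * Vr t n)" using ecoef_hatc[OF n] ecoef_Vr[OF n] by simp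
  also have "\<dots> \<ge> 0"
  proof (rule sum_nonneg)
    fix t assume "t \<in> {1..N}"
    thus "hatc N c F t * Vr t n \<ge> 0" using F Vr_ge1[of t n] n by (simp add: antinef_def)
  qed
  finally show ?thesis .
qed

lemma antinef_hatc_pos:
  assumes F: "antinef N c F" and nonzero: "\<exists>i\<in>{1..N}. F i \<noteq> 0"
  shows "\<exists>t\<in>{1..N}. hatc N c F t > 0"
proof (rule ccontr)
  assume "\<not> ?thesis"
  hence zero: "hatc N c F t = 0" if "t \<in> {1..N}" for t using F that by (force simp: antinef_def)
  have "F i = 0" if i: "i \<in> {1..N}" for i
  proof -
    have "F i = (\<Sum>t=1..N. hatc N c F t * Vr t i)" using ecoef_hatc[OF i] ecoef_Vr[OF i] by simp
    also have "\<dots> = 0" using zero by (intro sum.neutral) auto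
    finally show ?thesis .
  qed
  thus False using nonzero by blast
qed

lemma ecoef_rhat:
  assumes i: "i \<in> {1..N}" and j: "j \<in> {1..N}" and n: "n \<in> {1..N}"
  shows "ecoef N c (rhat N c i j) n = Vschur i j n"
proof -
  have "ecoef N c (rhat N c i j) n =
      (\<Sum>t=1..N. (if t = j then Vr t n else 0) - rho N c i j i * (if t = i then Vr t n else 0))"
    unfolding ecoef_Vr[OF n] by (rule sum.cong[OF refl]) (simp add: rhat_def algebra_simps)
  also have "\<dots> = Vr j n - rho N c i j i * Vr i n"
    using i j by (simp add: sum_subtractf sum_distrib_left[symmetric] sum.delta)
  finally show ?thesis using i j by (simp add: rho_def Vmat_eq Vschur_def)
qed

definition modif_defect :: "nat \<Rightarrow> (nat \<Rightarrow> real) \<Rightarrow> nat \<Rightarrow> real" where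
  "modif_defect m gh n = (\<Sum>i\<in>{i\<in>{1..N}. adj N c i m}. \<Sum>j\<in>branch N c m i. gh j * Vschur i j n)"

lemma ecoef_modif:
  assumes n: "n \<in> {1..N}"
  shows "ecoef N c (modif N c m fh gh) n = ecoef N c fh n - modif_defect m gh n"
proof -
  let ?Nb = "{i\<in>{1..N}. adj N c i m}"
  have "(\<Sum>t=1..N. (\<Sum>i\<in>?Nb. \<Sum>j\<in>branch N c m i. gh j * rhat N c i j t) * Vr t n) =
      (\<Sum>i\<in>?Nb. \<Sum>j\<in>branch N c m i. gh j * (\<Sum>t=1..N. rhat N c i j t * Vr t n))"
    by (simp add: sum_distrib_left sum_distrib_right mult.assoc)
      (subst sum.swap, rule sum.cong[OF refl], rule sum.swap)
  also have "\<dots> = modif_defect m gh n"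
    unfolding modif_defect_def
  proof (intro sum.cong refl)
    fix i j assume i: "i \<in> ?Nb" and "j \<in> branch N c m i"
    hence "j \<in> {1..N}" using branch_subset by blast
    thus "gh j * (\<Sum>t=1..N. rhat N c i j t * Vr t n) = gh j * Vschur i j n"
      using ecoef_rhat[OF _ _ n, of i j] ecoef_Vr[OF n, of "rhat N c i j"] i by simp
  qed
  finally show ?thesis
    unfolding ecoef_Vr[OF n] modif_def by (simp add: left_diff_distrib sum_subtractf)
qed

lemma modif_defect_terms_nonneg:
  assumes gh: "\<forall>j\<in>{1..N}. gh j \<ge> 0" and n: "n \<in> {1..N}" and i: "i \<in> {1..N}"
    and j: "j \<in> branch N c m i"
  shows "gh j * Vschur i j n \<ge> 0"
proof -
  have "j \<in> {1..N}" using j branch_subset by blast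
  thus ?thesis using gh Vschur_nonneg[OF i n] by simp
qed

lemma modif_defect_nonneg:
  assumes "\<forall>j\<in>{1..N}. gh j \<ge> 0" and "n \<in> {1..N}"
  shows "modif_defect m gh n \<ge> 0"
  unfolding modif_defect_def using modif_defect_terms_nonneg[OF assms]
  by (intro sum_nonneg) auto

lemma modif_defect_eq_0_iff:
  assumes gh: "\<forall>j\<in>{1..N}. gh j \<ge> 0" and n: "n \<in> {1..N}"
  shows "modif_defect m gh n = 0 \<longleftrightarrow>
    (\<forall>i. adj N c i m \<longrightarrow> (\<forall>j \<in> branch N c m i \<inter> branch N c i n. gh j = 0))"
proof -
  let ?Nb = "{i\<in>{1..N}. adj N c i m}"
  note nonneg = modif_defect_terms_nonneg[OF gh n]
  have inner: "(\<Sum>j\<in>branch N c m i. gh j * Vschur i j n) \<ge> 0" if "i \<in> ?Nb" for i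
    using nonneg that by (intro sum_nonneg) auto
  have term0: "gh j * Vschur i j n = 0 \<longleftrightarrow> (j \<in> branch N c i n \<longrightarrow> gh j = 0)"
    if "i \<in> {1..N}" "j \<in> {1..N}" for i j
    using Vschur_branch_pos[OF that(1) n, of j] Vschur_outside_branch[OF that(1) n that(2)]
    by (cases "j \<in> branch N c i n") auto
  have "modif_defect m gh n = 0 \<longleftrightarrow> (\<forall>i\<in>?Nb. (\<Sum>j\<in>branch N c m i. gh j * Vschur i j n) = 0)"
    unfolding modif_defect_def by (rule sum_nonneg_eq_0_iff) (use inner in auto)
  also have "\<dots> \<longleftrightarrow> (\<forall>i\<in>?Nb. \<forall>j\<in>branch N c m i. gh j * Vschur i j n = 0)"
  proof (rule ball_cong[OF refl])
    fix i assume "i \<in> ?Nb"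
    thus "(\<Sum>j\<in>branch N c m i. gh j * Vschur i j n) = 0 \<longleftrightarrow> (\<forall>j\<in>branch N c m i. gh j * Vschur i j n = 0)"
      by (intro sum_nonneg_eq_0_iff finite_branch nonneg) auto
  qed
  also have "\<dots> \<longleftrightarrow> (\<forall>i. adj N c i m \<longrightarrow> (\<forall>j \<in> branch N c m i \<inter> branch N c i n. gh j = 0))"
  proof -
    have "(j \<in> branch N c i n \<longrightarrow> gh j = 0) \<longleftrightarrow> gh j * Vschur i j n = 0"
      if "adj N c i m" "j \<in> branch N c m i" for i j
      using that adj_vertices branch_subset term0 by blast
    note equiv = this
    show ?thesis
    proof (intro iffI allI impI ballI)
      fix i j assume H: "\<forall>i\<in>?Nb. \<forall>j\<in>branch N c m i. gh j * Vschur i j n = 0"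
        and im: "adj N c i m" and j: "j \<in> branch N c m i \<inter> branch N c i n"
      have "i \<in> ?Nb" using im adj_vertices by blast
      thus "gh j = 0" using H j equiv[OF im] by blast
    next
      fix i j assume "\<forall>i. adj N c i m \<longrightarrow> (\<forall>j \<in> branch N c m i \<inter> branch N c i n. gh j = 0)"
        and "i \<in> ?Nb" and "j \<in> branch N c m i"
      thus "gh j * Vschur i j n = 0" using equiv[of i j] by blast
    qed
  qed
  finally show ?thesis .
qed

lemma modif_weight_lt_Vr:
  assumes t: "t \<in> {1..N}" and n: "n \<in> {1..N}"
  shows "(\<Sum>i\<in>{i\<in>{1..N}. adj N c i m \<and> t \<in> branch N c m i}. Vschur i t n) < Vr t n"
proof -
  let ?I = "{i\<in>{1..N}. adj N c i m \<and> t \<in> branch N c m i}"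
  have unique: "i = i'" if "i \<in> ?I" "i' \<in> ?I" for i i'
  proof (rule ccontr)
    assume "i \<noteq> i'"
    thus False using branches_at_vertex_disjoint[of i m i'] that by blast
  qed
  show ?thesis
  proof (cases "?I = {}")
    case False
    then obtain i where i: "i \<in> ?I" by blast
    hence I: "?I = {i}" using unique by blast
    have "i \<in> {1..N}" using i by blast
    hence "Vr t i > 0" "Vr i n > 0" "Vr i i > 0" using Vr_ge1[OF t] Vr_ge1[OF _ n] Vr_ge1[of i i] by force+
    hence "Vr t i * (Vr i n / Vr i i) > 0" by simp
    thus ?thesis using I by (simp add: Vschur_def)
  next
    case True
    show ?thesis unfolding True using Vr_ge1[OF t n] by simp
  qed
qed

lemma modif_defect_eq_weighted_sum:
  "modif_defect m gh n =
    (\<Sum>t=1..N. gh t * (\<Sum>i\<in>{i\<in>{1..N}. adj N c i m \<and> t \<in> branch N c m i}. Vschur i t n))"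
proof -
  let ?Nb = "{i\<in>{1..N}. adj N c i m}"
  have "modif_defect m gh n =
      (\<Sum>i\<in>?Nb. \<Sum>t=1..N. if t \<in> branch N c m i then gh t * Vschur i t n else 0)"
    unfolding modif_defect_def
  proof (rule sum.cong[OF refl])
    fix i
    show "(\<Sum>j\<in>branch N c m i. gh j * Vschur i j n) =
        (\<Sum>t=1..N. if t \<in> branch N c m i then gh t * Vschur i t n else 0)"
      using sum.inter_restrict[of "{1..N}" "\<lambda>t. gh t * Vschur i t n" "branch N c m i"]
        Int_absorb1[OF branch_subset] by simp
  qed
  also have "\<dots> = (\<Sum>t=1..N. \<Sum>i\<in>?Nb. if t \<in> branch N c m i then gh t * Vschur i t n else 0)"
    by (rule sum.swap)
  also have "\<dots> = (\<Sum>t=1..N. gh t * (\<Sum>i\<in>{i\<in>?Nb. t \<in> branch N c m i}. Vschur i t n))"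
  proof (rule sum.cong[OF refl])
    fix t
    show "(\<Sum>i\<in>?Nb. if t \<in> branch N c m i then gh t * Vschur i t n else 0) =
        gh t * (\<Sum>i\<in>{i\<in>?Nb. t \<in> branch N c m i}. Vschur i t n)"
      using sum.inter_filter[of ?Nb "\<lambda>i. gh t * Vschur i t n" "\<lambda>i. t \<in> branch N c m i"]
      by (simp add: sum_distrib_left)
  qed
  finally show ?thesis by (simp add: conj_assoc)
qed

lemma ecoef_modif_hatc_pos:
  assumes F: "antinef N c F" and nonzero: "\<exists>i\<in>{1..N}. F i \<noteq> 0" and n: "n \<in> {1..N}"
  shows "ecoef N c (modif N c m (hatc N c F) (hatc N c F)) n > 0"
proof -
  let ?w = "\<lambda>t. Vr t n - (\<Sum>i\<in>{i\<in>{1..N}. adj N c i m \<and> t \<in> branch N c m i}. Vschur i t n)"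
  have "ecoef N c (modif N c m (hatc N c F) (hatc N c F)) n = F n - modif_defect m (hatc N c F) n"
    using ecoef_modif[OF n] ecoef_hatc[OF n] by simp
  also have "\<dots> = (\<Sum>t=1..N. hatc N c F t * ?w t)"
    using ecoef_hatc[OF n, of F] ecoef_Vr[OF n, of "hatc N c F"]
    by (simp add: modif_defect_eq_weighted_sum right_diff_distrib sum_subtractf)
  also have "\<dots> > 0"
  proof -
    obtain t where t: "t \<in> {1..N}" "hatc N c F t > 0" using antinef_hatc_pos[OF F nonzero] by blast
    have w: "?w s > 0" if "s \<in> {1..N}" for s using modif_weight_lt_Vr[OF that n] by simp
    have "hatc N c F s * ?w s \<ge> 0" if "s \<in> {1..N}" for s
      using F that w[OF that] by (simp add: antinef_def)
    moreover have "hatc N c F t * ?w t > 0" using t w by simp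
    ultimately show ?thesis by (intro sum_pos2[OF _ t(1)]) auto
  qed
  finally show ?thesis .
qed

end

lemma divide_le_divide_diff:
  fixes a x s :: real
  assumes "0 < a" "0 \<le> s" "0 < x - s"
  shows "a / x \<le> a / (x - s) \<and> (a / (x - s) = a / x \<longleftrightarrow> s = 0)"
  using assms by (auto simp: frac_le frac_eq_eq)

theorem mainTheorem8:
  fixes N :: nat and c :: config and m n :: nat and f g :: "nat \<Rightarrow> int"
  assumes "valid_blowups N c"
    and "m \<in> {1..N}" and "n \<in> {1..N}"
    and "antinef N c (\<lambda>i. real_of_int (f i))"
    and "\<exists>i\<in>{1..N}. f i \<noteq> 0"
    and "antinef N c (\<lambda>i. real_of_int (g i))"
  shows "lam N c (\<lambda>i. real_of_int (g i))
            (ecoef N c (modif N c m (hatc N c (\<lambda>i. real_of_int (f i)))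
                                     (hatc N c (\<lambda>i. real_of_int (f i))))) n
         \<ge> lam N c (\<lambda>i. real_of_int (g i)) (\<lambda>i. real_of_int (f i)) n
       \<and> (lam N c (\<lambda>i. real_of_int (g i))
            (ecoef N c (modif N c m (hatc N c (\<lambda>i. real_of_int (f i)))
                                     (hatc N c (\<lambda>i. real_of_int (f i))))) n
          = lam N c (\<lambda>i. real_of_int (g i)) (\<lambda>i. real_of_int (f i)) n
          \<longleftrightarrow> gdist N c m n \<le> 1 \<or>
              (\<exists>i. adj N c m i \<and> gdist N c i n + 1 = gdist N c m n \<and>
                   (\<forall>j\<in>branch N c i n. hatc N c (\<lambda>l. real_of_int (f l)) j = 0)))"
proof -
  let ?F = "\<lambda>i. real_of_int (f i)" and ?G = "\<lambda>i. real_of_int (g i)"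
  let ?S = "modif_defect N c m (hatc N c ?F) n"
  have hatc_nonneg: "\<forall>j\<in>{1..N}. hatc N c ?F j \<ge> 0" using assms(4) by (simp add: antinef_def)
  have modif: "ecoef N c (modif N c m (hatc N c ?F) (hatc N c ?F)) n = ?F n - ?S"
    using ecoef_modif[OF assms(1,3)] ecoef_hatc[OF assms(1,3)] by simp
  have S: "?S \<ge> 0" using modif_defect_nonneg[OF assms(1) hatc_nonneg assms(3)] .
  have pos: "?F n - ?S > 0"
    using ecoef_modif_hatc_pos[OF assms(1,4) _ assms(3), of m] assms(5) modif by simp
  have num: "?G n + kcoef N c n + 1 > 0"
    using antinef_nonneg[OF assms(1,6,3)] kcoef_ge1[OF assms(1,3)] by simp
  have "?S = 0 \<longleftrightarrow> gdist N c m n \<le> 1 \<or>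
      (\<exists>i. adj N c m i \<and> gdist N c i n + 1 = gdist N c m n \<and> (\<forall>j\<in>branch N c i n. hatc N c ?F j = 0))"
    using modif_defect_eq_0_iff[OF assms(1) hatc_nonneg assms(3)] branches_overlap_free_iff[OF assms(1-3)]
    by simp
  with divide_le_divide_diff[OF num S pos]
  show ?thesis unfolding lam_def modif by simp
qed

end
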